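(* Let $1<p_1<p_2<\infty$. Let $\mathbf{x},\mathbf{y}_1,\dots,\mathbf{y}_m\in \ell_{p_1}\cap \ell_{p_2}$ be such that $\mathbf{y}_1,\dots,\mathbf{y}_m$ are linearly independent and $\mathbf{x}\notin \mathbb{Y}=\mathrm{span}\{\mathbf{y}_1,\dots,\mathbf{y}_m\}$. Let $\mathbf{x_0}$ and $\mathbf{y_0}$ be the best approximations to $\mathbf{x}$ out of $\mathbb{Y}$ in $\ell_{p_1}$ and in $\ell_{p_2}$, respectively. Then $\mathrm{dist}_{p_1}(\mathbf{x},\mathbb{Y})=\mathrm{dist}_{p_2}(\mathbf{x},\mathbb{Y})$ if and only if there exist a non-zero $\lambda\in \mathbb{R}$ and $j\in \mathbb{N}$ such that $\mathbf{x}-\mathbf{x_0}=\mathbf{x}-\mathbf{y_0}=\lambda e_j$ and $\mathbb{Y}\subseteq \{(\lambda_1,\lambda_2,\dots)\in \ell_{p_1}\cap \ell_{p_2}: \lambda_j=0\}$.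
   Context: $\ell_p$ is the real sequence space with norm $\|(x_k)\|_p=(\sum_k|x_k|^p)^{1/p}$; $e_j$ is the sequence with $1$ in position $j$ and $0$ elsewhere. $\mathrm{dist}_p(\mathbf{x},\mathbb{Y})=\inf_{y\in\mathbb{Y}}\|\mathbf{x}-y\|_p$. For $1<p<\infty$, best approximations from finite-dimensional subspaces of $\ell_p$ exist and are unique. *)

theory Defs
  imports "HOL-Analysis.Analysis"
begin

definition in_lp :: "real \<Rightarrow> (nat \<Rightarrow> real) \<Rightarrow> bool" where
  "in_lp p x \<longleftrightarrow> summable (\<lambda>k. \<bar>x k\<bar> powr p)"

definition lp_norm :: "real \<Rightarrow> (nat \<Rightarrow> real) \<Rightarrow> real" where
  "lp_norm p x = (\<Sum>k. \<bar>x k\<bar> powr p) powr (1 / p)"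

definition unit_seq :: "nat \<Rightarrow> nat \<Rightarrow> real" where
  "unit_seq j = (\<lambda>k. if k = j then 1 else 0)"

definition seq_span :: "nat \<Rightarrow> (nat \<Rightarrow> nat \<Rightarrow> real) \<Rightarrow> (nat \<Rightarrow> real) set" where
  "seq_span m y = {(\<lambda>k. \<Sum>i<m. c i * y i k) | c. True}"

definition seq_lin_indep :: "nat \<Rightarrow> (nat \<Rightarrow> nat \<Rightarrow> real) \<Rightarrow> bool" where
  "seq_lin_indep m y \<longleftrightarrow>
     (\<forall>c. (\<forall>k. (\<Sum>i<m. c i * y i k) = 0) \<longrightarrow> (\<forall>i<m. c i = 0))"

definition dist_lp :: "real \<Rightarrow> (nat \<Rightarrow> real) \<Rightarrow> (nat \<Rightarrow> real) set \<Rightarrow> real" where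
  "dist_lp p x Y = (INF z\<in>Y. lp_norm p (\<lambda>k. x k - z k))"

definition best_approx :: "real \<Rightarrow> (nat \<Rightarrow> real) \<Rightarrow> (nat \<Rightarrow> real) set \<Rightarrow> (nat \<Rightarrow> real) \<Rightarrow> bool" where
  "best_approx p x Y x0 \<longleftrightarrow> x0 \<in> Y \<and>
     (\<forall>z\<in>Y. lp_norm p (\<lambda>k. x k - x0 k) \<le> lp_norm p (\<lambda>k. x k - z k))"

end

theory Submission imports Defs begin

text \<open>
  For \<open>0 < p < q\<close> every entry satisfies \<open>|v k| \<le> \<parallel>v\<parallel>\<^sub>p\<close>, hence
  \<open>|v k|^q \<le> |v k|^p \<parallel>v\<parallel>\<^sub>p^(q-p)\<close> and \<open>\<parallel>v\<parallel>\<^sub>q \<le> \<parallel>v\<parallel>\<^sub>p\<close>; equality forces every entry to be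
  \<open>0\<close> or of modulus \<open>\<parallel>v\<parallel>\<^sub>p\<close>, so \<open>v\<close> is a multiple of a unit vector. Equal distances give
  \<open>\<parallel>x - x0\<parallel>\<^sub>p\<^sub>1 = \<parallel>x - y0\<parallel>\<^sub>p\<^sub>2 \<le> \<parallel>x - x0\<parallel>\<^sub>p\<^sub>2 \<le> \<parallel>x - x0\<parallel>\<^sub>p\<^sub>1\<close>, so \<open>x - x0 = c e\<^sub>j\<close>.
  If some \<open>z \<in> Y\<close> had \<open>z j \<noteq> 0\<close>, moving \<open>x0\<close> slightly along \<open>z\<close> would lower the
  \<open>p1\<close>-distance, since the \<open>j\<close>-th entry shrinks linearly while the other entries cost only
  \<open>O(s^p1)\<close> with \<open>p1 > 1\<close>. Once all of \<open>Y\<close> vanishes at \<open>j\<close>,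
  \<open>\<parallel>x - z\<parallel>\<^sub>p^p = |c|^p + \<parallel>x0 - z\<parallel>\<^sub>p^p\<close> for \<open>z \<in> Y\<close>, so \<open>x0\<close> is also the \<open>p2\<close>-best
  approximation.
\<close>

lemma in_lp_scale:
  assumes "in_lp p u" "0 < p"
  shows "in_lp p (\<lambda>k. a * u k)"
proof -
  have "summable (\<lambda>k. \<bar>a\<bar> powr p * \<bar>u k\<bar> powr p)"
    using assms unfolding in_lp_def by (intro summable_mult)
  then show ?thesis unfolding in_lp_def by (simp add: abs_mult powr_mult)
qed

lemma abs_add_powr_le:
  fixes a b p :: real
  assumes "0 < p"
  shows "\<bar>a + b\<bar> powr p \<le> 2 powr p * (\<bar>a\<bar> powr p + \<bar>b\<bar> powr p)"
proof -
  have "\<bar>a + b\<bar> powr p \<le> (2 * max \<bar>a\<bar> \<bar>b\<bar>) powr p"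
    using assms by (intro powr_mono2) auto
  also have "\<dots> = 2 powr p * max \<bar>a\<bar> \<bar>b\<bar> powr p" by (simp add: powr_mult)
  also have "max \<bar>a\<bar> \<bar>b\<bar> powr p \<le> \<bar>a\<bar> powr p + \<bar>b\<bar> powr p"
    by (cases "\<bar>a\<bar> \<le> \<bar>b\<bar>") (auto simp: max_def)
  finally show ?thesis by (simp add: mult_left_mono)
qed

lemma in_lp_add:
  assumes "in_lp p u" "in_lp p v" "0 < p"
  shows "in_lp p (\<lambda>k. u k + v k)"
proof -
  have "summable (\<lambda>k. 2 powr p * (\<bar>u k\<bar> powr p + \<bar>v k\<bar> powr p))"
    using assms unfolding in_lp_def by (intro summable_mult summable_add)
  then show ?thesis unfolding in_lp_def
    by (rule summable_comparison_test'[where N=0]) (use abs_add_powr_le assms in auto)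
qed

lemma in_lp_diff:
  assumes "in_lp p u" "in_lp p v" "0 < p"
  shows "in_lp p (\<lambda>k. u k - v k)"
  using in_lp_add[OF assms(1) in_lp_scale[OF assms(2,3), of "-1"] assms(3)] by simp

lemma in_lp_sum:
  assumes "finite I" "\<And>i. i \<in> I \<Longrightarrow> in_lp p (f i)" "0 < p"
  shows "in_lp p (\<lambda>k. \<Sum>i\<in>I. f i k)"
  using assms
proof (induction I rule: finite_induct)
  case empty
  then show ?case by (simp add: in_lp_def)
next
  case (insert i I)
  then show ?case by (simp add: in_lp_add)
qed

lemma in_lp_seq_span:
  assumes "\<And>i. i < m \<Longrightarrow> in_lp p (y i)" "0 < p" "z \<in> seq_span m y"
  shows "in_lp p z"
  using assms unfolding seq_span_def by (auto intro!: in_lp_sum in_lp_scale)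

lemma seq_span_add_scaled:
  assumes "u \<in> seq_span m y" "v \<in> seq_span m y"
  shows "(\<lambda>k. u k + t * v k) \<in> seq_span m y"
proof -
  obtain a b where "u = (\<lambda>k. \<Sum>i<m. a i * y i k)" "v = (\<lambda>k. \<Sum>i<m. b i * y i k)"
    using assms unfolding seq_span_def by auto
  then have "(\<lambda>k. u k + t * v k) = (\<lambda>k. \<Sum>i<m. (a i + t * b i) * y i k)"
    by (simp add: sum_distrib_left sum.distrib algebra_simps)
  then show ?thesis unfolding seq_span_def by auto
qed

lemma dist_lp_eq_best_approx:
  assumes "best_approx p x Y x0"
  shows "dist_lp p x Y = lp_norm p (\<lambda>k. x k - x0 k)"
proof -
  have "x0 \<in> Y" and "\<And>z. z \<in> Y \<Longrightarrow> lp_norm p (\<lambda>k. x k - x0 k) \<le> lp_norm p (\<lambda>k. x k - z k)"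
    using assms unfolding best_approx_def by auto
  then show ?thesis unfolding dist_lp_def
    by (intro antisym cINF_lower cINF_greatest) (auto simp: bdd_below_def)
qed

lemma lp_norm_scaled_unit_seq:
  assumes "0 < p"
  shows "lp_norm p (\<lambda>k. c * unit_seq j k) = \<bar>c\<bar>"
proof -
  have "(\<lambda>k. \<bar>c * unit_seq j k\<bar> powr p) = (\<lambda>k. if k = j then \<bar>c\<bar> powr p else 0)"
    by (auto simp: unit_seq_def)
  moreover have "(\<lambda>k. if k = j then \<bar>c\<bar> powr p else 0) sums (\<bar>c\<bar> powr p)"
    by (rule sums_single)
  ultimately show ?thesis unfolding lp_norm_def using assms by (simp add: sums_iff powr_powr)
qed

lemma lp_norm_powr:
  assumes "0 < p" "in_lp p v"
  shows "lp_norm p v powr p = (\<Sum>k. \<bar>v k\<bar> powr p)"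
  using assms suminf_nonneg[of "\<lambda>k. \<bar>v k\<bar> powr p"]
  by (simp add: lp_norm_def in_lp_def powr_powr)

lemma powr_le_powr_cancel:
  fixes a b p :: real
  assumes "0 < p" "0 \<le> b" "a powr p \<le> b powr p"
  shows "a \<le> b"
  using assms powr_less_mono2[of p b a] by (cases "0 \<le> a") force+

lemma abs_le_lp_norm:
  assumes "0 < p" "in_lp p v"
  shows "\<bar>v k\<bar> \<le> lp_norm p v"
proof (rule powr_le_powr_cancel[OF assms(1)])
  show "\<bar>v k\<bar> powr p \<le> lp_norm p v powr p"
    using assms sum_le_suminf[of "\<lambda>k. \<bar>v k\<bar> powr p" "{k}"]
    by (simp add: lp_norm_powr in_lp_def)
qed (simp add: lp_norm_def)

lemma powr_le_mult_bound_powr: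
  fixes a N p q :: real
  assumes "0 \<le> a" "a \<le> N" "p \<le> q"
  shows "a powr q \<le> a powr p * N powr (q - p)"
proof -
  have "a powr q = a powr p * a powr (q - p)"
    using powr_add[of a p "q - p"] by simp
  also have "\<dots> \<le> a powr p * N powr (q - p)"
    using assms by (intro mult_left_mono powr_mono2) auto
  finally show ?thesis .
qed

lemma powr_less_mult_bound_powr:
  fixes a N p q :: real
  assumes "0 < a" "a < N" "p < q"
  shows "a powr q < a powr p * N powr (q - p)"
proof -
  have "a powr q = a powr p * a powr (q - p)"
    using powr_add[of a p "q - p"] by simp
  also have "\<dots> < a powr p * N powr (q - p)"
    using assms by (intro mult_strict_left_mono powr_less_mono2) auto
  finally show ?thesis .
qed

lemma
  assumes "0 < p" "p \<le> q" "in_lp p v"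
  shows in_lp_mono_exponent: "in_lp q v"
    and lp_sum_le_lp_norm_powr: "(\<Sum>k. \<bar>v k\<bar> powr q) \<le> lp_norm p v powr q"
proof -
  define N where "N = lp_norm p v"
  have bound: "\<bar>v k\<bar> powr q \<le> \<bar>v k\<bar> powr p * N powr (q - p)" for k
    unfolding N_def using assms abs_le_lp_norm by (intro powr_le_mult_bound_powr) auto
  have summable_p: "summable (\<lambda>k. \<bar>v k\<bar> powr p * N powr (q - p))"
    using assms(3) unfolding in_lp_def by (rule summable_mult2)
  have summable_q: "summable (\<lambda>k. \<bar>v k\<bar> powr q)"
    by (rule summable_comparison_test'[OF summable_p, where N=0]) (use bound in auto)
  then show "in_lp q v" unfolding in_lp_def .
  have "(\<Sum>k. \<bar>v k\<bar> powr q) \<le> (\<Sum>k. \<bar>v k\<bar> powr p * N powr (q - p))"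
    by (rule suminf_le[OF bound summable_q summable_p])
  also have "\<dots> = (\<Sum>k. \<bar>v k\<bar> powr p) * N powr (q - p)"
    using assms(3) unfolding in_lp_def by (rule suminf_mult2[symmetric])
  also have "\<dots> = N powr q"
    using powr_add[of N p "q - p"] by (simp add: N_def lp_norm_powr[OF assms(1,3)])
  finally show "(\<Sum>k. \<bar>v k\<bar> powr q) \<le> lp_norm p v powr q" unfolding N_def .
qed

lemma lp_norm_antimono_exponent:
  assumes "0 < p" "p \<le> q" "in_lp p v"
  shows "lp_norm q v \<le> lp_norm p v"
proof (rule powr_le_powr_cancel)
  have "0 < q" "in_lp q v" using assms in_lp_mono_exponent by auto
  then show "lp_norm q v powr q \<le> lp_norm p v powr q"
    using lp_sum_le_lp_norm_powr[OF assms] by (simp only: lp_norm_powr)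
qed (use assms in \<open>auto simp: lp_norm_def\<close>)

lemma lp_norm_exponent_eq_imp_abs_eq:
  assumes "0 < p" "p < q" "in_lp p v" and eq: "lp_norm q v = lp_norm p v"
  shows "v k = 0 \<or> \<bar>v k\<bar> = lp_norm p v"
proof (rule ccontr)
  assume contra: "\<not> (v k = 0 \<or> \<bar>v k\<bar> = lp_norm p v)"
  define N where "N = lp_norm p v"
  have vk: "0 < \<bar>v k\<bar>" "\<bar>v k\<bar> < N"
    using contra abs_le_lp_norm[OF assms(1,3), of k] unfolding N_def by auto
  define g where "g i = \<bar>v i\<bar> powr p * N powr (q - p) - \<bar>v i\<bar> powr q" for i
  have q_pos: "0 < q" using assms(1,2) by simp
  have vq: "in_lp q v" using in_lp_mono_exponent[OF assms(1) _ assms(3)] assms(2) by simp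
  have g_nonneg: "0 \<le> g i" for i
    using powr_le_mult_bound_powr[of "\<bar>v i\<bar>" N p q] abs_le_lp_norm[OF assms(1,3), of i] assms(2)
    unfolding g_def N_def by linarith
  have "(\<lambda>i. \<bar>v i\<bar> powr p) sums N powr p"
    using assms(3) unfolding N_def lp_norm_powr[OF assms(1,3)] in_lp_def by (rule summable_sums)
  moreover have "(\<lambda>i. \<bar>v i\<bar> powr q) sums N powr q"
    using vq unfolding N_def eq[symmetric] lp_norm_powr[OF q_pos vq] in_lp_def
    by (rule summable_sums)
  ultimately have "g sums (N powr p * N powr (q - p) - N powr q)"
    unfolding g_def by (intro sums_diff sums_mult2)
  then have "g sums 0"
    using powr_add[of N p "q - p"] by simp
  then have "g k = 0"
    using g_nonneg suminf_eq_zero_iff[of g] sums_unique[of g 0] sums_summable[of g 0] by simp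
  then show False
    using powr_less_mult_bound_powr[OF vk assms(2)] unfolding g_def by simp
qed

lemma single_support_if_abs_eq_lp_norm:
  assumes "0 < p" "in_lp p v" and abs_eq: "\<And>k. v k = 0 \<or> \<bar>v k\<bar> = lp_norm p v"
    and "v j \<noteq> 0"
  shows "v = (\<lambda>k. v j * unit_seq j k)"
proof -
  have "v k = 0" if "k \<noteq> j" for k
  proof (rule ccontr)
    assume "v k \<noteq> 0"
    define N where "N = lp_norm p v"
    have "\<bar>v j\<bar> = N" "\<bar>v k\<bar> = N"
      using abs_eq \<open>v j \<noteq> 0\<close> \<open>v k \<noteq> 0\<close> unfolding N_def by metis+
    then have "0 < N powr p" using \<open>v k \<noteq> 0\<close> by auto
    have "(\<Sum>i\<in>{j, k}. \<bar>v i\<bar> powr p) \<le> (\<Sum>i. \<bar>v i\<bar> powr p)"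
      using assms(2) unfolding in_lp_def by (rule sum_le_suminf) auto
    also have "\<dots> = N powr p"
      unfolding N_def lp_norm_powr[OF assms(1,2)] ..
    finally have "2 * N powr p \<le> N powr p"
      using \<open>\<bar>v j\<bar> = N\<close> \<open>\<bar>v k\<bar> = N\<close> that by simp
    then show False using \<open>0 < N powr p\<close> by simp
  qed
  then show ?thesis by (auto simp: unit_seq_def)
qed

lemma lp_norm_exponent_eq_imp_scaled_unit_seq:
  assumes "0 < p" "p < q" "in_lp p v" "lp_norm q v = lp_norm p v" "v \<noteq> (\<lambda>k. 0)"
  shows "\<exists>c j. c \<noteq> 0 \<and> v = (\<lambda>k. c * unit_seq j k)"
proof -
  obtain j where "v j \<noteq> 0" using assms(5) by auto
  then show ?thesis
    using single_support_if_abs_eq_lp_norm[OF assms(1,3) lp_norm_exponent_eq_imp_abs_eq[OF assms(1-4)]]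
    by blast
qed

definition lp_subspace :: "real \<Rightarrow> (nat \<Rightarrow> real) set \<Rightarrow> bool" where
  "lp_subspace p Y \<longleftrightarrow> (\<forall>z\<in>Y. in_lp p z) \<and> (\<forall>u\<in>Y. \<forall>v\<in>Y. \<forall>t. (\<lambda>k. u k + t * v k) \<in> Y)"

lemma lp_subspace_seq_span:
  assumes "\<And>i. i < m \<Longrightarrow> in_lp p (y i)" "0 < p"
  shows "lp_subspace p (seq_span m y)"
  using assms in_lp_seq_span seq_span_add_scaled unfolding lp_subspace_def by blast

lemma exists_small_step_powr_less:
  fixes a b A p :: real
  assumes "0 < a" "0 < b" "0 \<le> A" "1 < p"
  shows "\<exists>s. 0 < s \<and> s < a / b \<and> (a - s * b) powr p + s powr p * A < a powr p"
proof -
  \<comment> \<open>By convexity (a - s b)^p drops by at least s a^(p-1) b, while s^p A = o(s) as p > 1.\<close>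
  define K where "K = a powr (p - 1) * b / (A + 1)"
  have K: "0 < K" unfolding K_def using assms by auto
  define s where "s = min (a / (2 * b)) ((K / 2) powr (1 / (p - 1)))"
  have s_pos: "0 < s" unfolding s_def using assms K by auto
  have s_less: "s < a / b" unfolding s_def using assms by (auto simp: min_def field_simps)
  have "s powr (p - 1) \<le> ((K / 2) powr (1 / (p - 1))) powr (p - 1)"
    unfolding s_def using s_pos assms by (intro powr_mono2) (auto simp: s_def)
  also have "\<dots> = K / 2" using assms K by (simp add: powr_powr)
  finally have sK: "s powr (p - 1) \<le> K / 2" .
  have pos: "0 < a - s * b" using s_less assms by (simp add: field_simps)
  have "(a - s * b) powr p = (a - s * b) powr (p - 1) * (a - s * b)"
    using powr_add[of "a - s * b" "p - 1" 1] pos by simp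
  also have "\<dots> \<le> a powr (p - 1) * (a - s * b)"
    using pos assms s_pos by (intro mult_right_mono powr_mono2) auto
  finally have first: "(a - s * b) powr p \<le> a powr p - s * (a powr (p - 1) * b)"
    using powr_add[of a "p - 1" 1] assms by (simp add: algebra_simps)
  have "s powr p * A = s * (s powr (p - 1) * A)"
    using powr_add[of s "p - 1" 1] s_pos by simp
  also have "s powr (p - 1) * A \<le> K / 2 * A" using sK assms by (intro mult_right_mono) auto
  also have "K / 2 * A < K * (A + 1)"
    using K assms mult_nonneg_nonneg[of A K] by (simp add: algebra_simps add_nonneg_pos)
  also have "K * (A + 1) = a powr (p - 1) * b" unfolding K_def using assms by simp
  finally have second: "s powr p * A < s * (a powr (p - 1) * b)" using s_pos by simp
  show ?thesis using first second s_pos s_less by (intro exI[of _ s]) auto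
qed

lemma
  assumes "in_lp p z"
  shows summable_unit_seq_diff: "summable (\<lambda>k. \<bar>c * unit_seq j k - t * z k\<bar> powr p)"
    and lp_sum_unit_seq_diff_le: "(\<Sum>k. \<bar>c * unit_seq j k - t * z k\<bar> powr p)
      \<le> \<bar>c - t * z j\<bar> powr p + \<bar>t\<bar> powr p * (\<Sum>k. \<bar>z k\<bar> powr p)"
proof -
  define h where "h k = (if k = j then \<bar>c - t * z j\<bar> powr p else 0) + \<bar>t\<bar> powr p * \<bar>z k\<bar> powr p" for k
  have h_sums: "h sums (\<bar>c - t * z j\<bar> powr p + \<bar>t\<bar> powr p * (\<Sum>k. \<bar>z k\<bar> powr p))"
    unfolding h_def using assms unfolding in_lp_def
    by (intro sums_add sums_single sums_mult summable_sums)
  have le_h: "\<bar>c * unit_seq j k - t * z k\<bar> powr p \<le> h k" for k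
    by (cases "k = j") (auto simp: h_def unit_seq_def abs_mult powr_mult)
  show summable: "summable (\<lambda>k. \<bar>c * unit_seq j k - t * z k\<bar> powr p)"
    by (rule summable_comparison_test'[OF sums_summable[OF h_sums], where N=0]) (use le_h in auto)
  show "(\<Sum>k. \<bar>c * unit_seq j k - t * z k\<bar> powr p)
      \<le> \<bar>c - t * z j\<bar> powr p + \<bar>t\<bar> powr p * (\<Sum>k. \<bar>z k\<bar> powr p)"
    using suminf_le[OF le_h summable sums_summable[OF h_sums]] sums_unique[OF h_sums] by simp
qed

lemma best_approx_unit_residual_imp_vanishing:
  assumes "1 < p" "lp_subspace p Y" and best: "best_approx p x Y x0"
    and residual: "(\<lambda>k. x k - x0 k) = (\<lambda>k. c * unit_seq j k)" and "c \<noteq> 0" and "z \<in> Y"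
  shows "z j = 0"
proof (rule ccontr)
  assume "z j \<noteq> 0"
  define a where "a = \<bar>c\<bar>"
  define b where "b = \<bar>z j\<bar>"
  define A where "A = (\<Sum>k. \<bar>z k\<bar> powr p)"
  have z_lp: "in_lp p z" using assms unfolding lp_subspace_def by blast
  have "0 \<le> A"
    unfolding A_def using z_lp unfolding in_lp_def by (rule suminf_nonneg) simp
  then obtain s where s: "0 < s" "s < a / b" "(a - s * b) powr p + s powr p * A < a powr p"
    using exists_small_step_powr_less[of a b A p] assms \<open>z j \<noteq> 0\<close> by (auto simp: a_def b_def)
  \<comment> \<open>Move x0 by t z, with the sign of t chosen to shrink the j-th coordinate of the residual.\<close>
  define t where "t = s * sgn c * sgn (z j)"
  have "\<bar>c - t * z j\<bar> = a - s * b"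
  proof -
    have "c - t * z j = sgn c * (a - s * b)"
      unfolding t_def a_def b_def using sgn_mult_abs[of c] abs_sgn[of "z j"]
      by (simp add: algebra_simps sgn_mult)
    moreover have "0 < a - s * b" using s \<open>z j \<noteq> 0\<close> by (simp add: b_def field_simps)
    ultimately show ?thesis using \<open>c \<noteq> 0\<close> by (simp add: abs_mult)
  qed
  moreover have "\<bar>t\<bar> = s" unfolding t_def using s \<open>c \<noteq> 0\<close> \<open>z j \<noteq> 0\<close> by (simp add: abs_mult)
  ultimately have less: "(\<Sum>k. \<bar>c * unit_seq j k - t * z k\<bar> powr p) < a powr p"
    using lp_sum_unit_seq_diff_le[OF z_lp, of c j t] s(3) unfolding A_def by simp
  have "(\<lambda>k. x0 k + t * z k) \<in> Y"
    using assms best unfolding lp_subspace_def best_approx_def by blast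
  then have "a \<le> lp_norm p (\<lambda>k. c * unit_seq j k - t * z k)"
    using best residual fun_cong[OF residual] lp_norm_scaled_unit_seq[of p c j] assms(1)
    unfolding best_approx_def a_def by (force simp: algebra_simps)
  then have "a powr p \<le> lp_norm p (\<lambda>k. c * unit_seq j k - t * z k) powr p"
    using assms(1) by (intro powr_mono2) (auto simp: a_def)
  also have "\<dots> = (\<Sum>k. \<bar>c * unit_seq j k - t * z k\<bar> powr p)"
    using assms(1) summable_unit_seq_diff[OF z_lp] by (simp add: lp_norm_powr in_lp_def)
  finally have "a powr p \<le> (\<Sum>k. \<bar>c * unit_seq j k - t * z k\<bar> powr p)" .
  then show False using less by simp
qed

lemma unit_seq_add_disjoint_sums:
  assumes "in_lp p w" "w j = 0"
  shows "(\<lambda>k. \<bar>c * unit_seq j k + w k\<bar> powr p) sums (\<bar>c\<bar> powr p + (\<Sum>k. \<bar>w k\<bar> powr p))"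
proof -
  have "(\<lambda>k. \<bar>c * unit_seq j k + w k\<bar> powr p)
      = (\<lambda>k. (if k = j then \<bar>c\<bar> powr p else 0) + \<bar>w k\<bar> powr p)"
    using assms(2) by (auto simp: unit_seq_def)
  also have "\<dots> sums (\<bar>c\<bar> powr p + (\<Sum>k. \<bar>w k\<bar> powr p))"
    using assms(1) unfolding in_lp_def by (intro sums_add sums_single summable_sums)
  finally show ?thesis .
qed

lemma best_approx_eq_if_unit_residual:
  assumes "0 < p" "lp_subspace p Y" and best: "best_approx p x Y y0" and "x0 \<in> Y"
    and residual: "(\<lambda>k. x k - x0 k) = (\<lambda>k. c * unit_seq j k)" and vanish: "\<forall>z\<in>Y. z j = 0"
  shows "y0 = x0"
proof -
  define w where "w k = x0 k - y0 k" for k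
  have "y0 \<in> Y" using best unfolding best_approx_def by blast
  then have "(\<lambda>k. x0 k + (-1) * y0 k) \<in> Y"
    using assms(2) \<open>x0 \<in> Y\<close> unfolding lp_subspace_def by blast
  then have "w \<in> Y" by (simp add: w_def[abs_def])
  then have w_lp: "in_lp p w" and "w j = 0" using assms(2) vanish unfolding lp_subspace_def by auto
  have y0_residual: "(\<lambda>k. x k - y0 k) = (\<lambda>k. c * unit_seq j k + w k)"
    using residual by (auto simp: fun_eq_iff w_def algebra_simps dest: fun_cong)
  define W where "W = (\<Sum>k. \<bar>w k\<bar> powr p)"
  have w_summable: "summable (\<lambda>k. \<bar>w k\<bar> powr p)" using w_lp unfolding in_lp_def .
  then have "0 \<le> W" unfolding W_def by (rule suminf_nonneg) simp
  have "lp_norm p (\<lambda>k. x k - y0 k) \<le> lp_norm p (\<lambda>k. x k - x0 k)"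
    using best \<open>x0 \<in> Y\<close> unfolding best_approx_def by blast
  then have "(\<bar>c\<bar> powr p + W) powr (1 / p) \<le> \<bar>c\<bar>"
    unfolding y0_residual residual lp_norm_scaled_unit_seq[OF assms(1)] W_def
    unfolding lp_norm_def sums_unique[OF unit_seq_add_disjoint_sums[OF w_lp \<open>w j = 0\<close>], symmetric] .
  then have "((\<bar>c\<bar> powr p + W) powr (1 / p)) powr p \<le> \<bar>c\<bar> powr p"
    using assms(1) by (intro powr_mono2) auto
  then have "W = 0" using assms(1) \<open>0 \<le> W\<close> by (simp add: powr_powr)
  then have "w k = 0" for k
    using suminf_eq_zero_iff[OF w_summable] unfolding W_def by simp
  then show "y0 = x0" by (auto simp: w_def)
qed

lemma residual_scaled_unit_seq_if_dist_lp_eq: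
  assumes "0 < p" "p < q" "lp_subspace p Y" "in_lp p x" "x \<notin> Y"
    and best_p: "best_approx p x Y x0" and best_q: "best_approx q x Y y0"
    and eq: "dist_lp p x Y = dist_lp q x Y"
  shows "\<exists>c j. c \<noteq> 0 \<and> (\<lambda>k. x k - x0 k) = (\<lambda>k. c * unit_seq j k)"
proof (rule lp_norm_exponent_eq_imp_scaled_unit_seq[OF assms(1,2)])
  have "x0 \<in> Y" using best_p unfolding best_approx_def by blast
  then show v_lp: "in_lp p (\<lambda>k. x k - x0 k)"
    using assms(1,3,4) unfolding lp_subspace_def by (blast intro: in_lp_diff)
  show "(\<lambda>k. x k - x0 k) \<noteq> (\<lambda>k. 0)"
  proof
    assume "(\<lambda>k. x k - x0 k) = (\<lambda>k. 0)"
    then have "x = x0" by (auto simp: fun_eq_iff dest: fun_cong)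
    then show False using \<open>x0 \<in> Y\<close> \<open>x \<notin> Y\<close> by simp
  qed
  have "lp_norm p (\<lambda>k. x k - x0 k) = lp_norm q (\<lambda>k. x k - y0 k)"
    using eq dist_lp_eq_best_approx[OF best_p] dist_lp_eq_best_approx[OF best_q] by simp
  also have "\<dots> \<le> lp_norm q (\<lambda>k. x k - x0 k)"
    using best_q \<open>x0 \<in> Y\<close> unfolding best_approx_def by blast
  finally have "lp_norm p (\<lambda>k. x k - x0 k) \<le> lp_norm q (\<lambda>k. x k - x0 k)" .
  moreover have "lp_norm q (\<lambda>k. x k - x0 k) \<le> lp_norm p (\<lambda>k. x k - x0 k)"
    using assms(1,2) v_lp by (intro lp_norm_antimono_exponent) auto
  ultimately show "lp_norm q (\<lambda>k. x k - x0 k) = lp_norm p (\<lambda>k. x k - x0 k)"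
    by (rule antisym[rotated])
qed

theorem theorem5p10:
  fixes p1 p2 :: real and m :: nat
    and x x0 y0 :: "nat \<Rightarrow> real" and y :: "nat \<Rightarrow> nat \<Rightarrow> real"
  assumes "1 < p1" and "p1 < p2"
    and "in_lp p1 x" and "in_lp p2 x"
    and "\<And>i. i < m \<Longrightarrow> in_lp p1 (y i) \<and> in_lp p2 (y i)"
    and "seq_lin_indep m y"
    and "x \<notin> seq_span m y"
    and "best_approx p1 x (seq_span m y) x0"
    and "best_approx p2 x (seq_span m y) y0"
  shows "dist_lp p1 x (seq_span m y) = dist_lp p2 x (seq_span m y) \<longleftrightarrow>
    (\<exists>c::real. \<exists>j::nat. c \<noteq> 0 \<and>
       (\<lambda>k. x k - x0 k) = (\<lambda>k. c * unit_seq j k) \<and>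
       (\<lambda>k. x k - y0 k) = (\<lambda>k. c * unit_seq j k) \<and>
       (\<forall>z\<in>seq_span m y. z j = 0))"
proof
  have p_pos: "0 < p1" "0 < p2" using assms(1,2) by auto
  have Y1: "lp_subspace p1 (seq_span m y)" and Y2: "lp_subspace p2 (seq_span m y)"
    using assms(5) p_pos by (auto intro: lp_subspace_seq_span)
  assume "dist_lp p1 x (seq_span m y) = dist_lp p2 x (seq_span m y)"
  then obtain c j where "c \<noteq> 0" and residual: "(\<lambda>k. x k - x0 k) = (\<lambda>k. c * unit_seq j k)"
    using residual_scaled_unit_seq_if_dist_lp_eq[OF p_pos(1) assms(2) Y1 assms(3,7-9)] by blast
  moreover have vanish: "\<forall>z\<in>seq_span m y. z j = 0"
    using best_approx_unit_residual_imp_vanishing[OF assms(1) Y1 assms(8) residual \<open>c \<noteq> 0\<close>] by blast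
  moreover have "y0 = x0"
    using assms(8) best_approx_eq_if_unit_residual[OF p_pos(2) Y2 assms(9) _ residual vanish]
    unfolding best_approx_def by blast
  ultimately show "\<exists>c j. c \<noteq> 0 \<and> (\<lambda>k. x k - x0 k) = (\<lambda>k. c * unit_seq j k) \<and>
      (\<lambda>k. x k - y0 k) = (\<lambda>k. c * unit_seq j k) \<and> (\<forall>z\<in>seq_span m y. z j = 0)"
    by blast
next
  assume "\<exists>c j. c \<noteq> 0 \<and> (\<lambda>k. x k - x0 k) = (\<lambda>k. c * unit_seq j k) \<and>
      (\<lambda>k. x k - y0 k) = (\<lambda>k. c * unit_seq j k) \<and> (\<forall>z\<in>seq_span m y. z j = 0)"
  then show "dist_lp p1 x (seq_span m y) = dist_lp p2 x (seq_span m y)"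
    using assms(1,2) dist_lp_eq_best_approx[OF assms(8)] dist_lp_eq_best_approx[OF assms(9)]
    by (auto simp: lp_norm_scaled_unit_seq)
qed

end
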